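(* Fix integers $n\ge m\ge 0$, an integer $N_T\ge 1$, and a target state $Q$, i.e. a nonzero homogeneous polynomial of degree $n-m$ in the $N_T$ variables $a^\dagger_1,\dots,a^\dagger_{N_T}$. Suppose the target $Q$ can be generated (in the sense defined in the context) from some $N$-mode Fock input with occupation numbers $(n_1,\dots,n_N)$, $\sum_i n_i=n$, heralded by some pattern $(m_1,\dots,m_M)$ on the last $M$ modes with $\sum_j m_j=m$ (where $N-M\ge N_T$). Then there exist an integer $N'$ and a number $M'$ of heralding modes such that $Q$ can also be generated from the $N'$-mode input with exactly one photon in each of the modes $1,\dots,n$ and vacuum in all other modes (i.e. the state $\prod_{i=1}^n a^\dagger_i|0\rangle$), heralded by a pattern in which each heralding mode that receives a photon receives exactly one, with $m$ photons in total, i.e. the pattern $(1,1,\dots,1)$ on $m$ heralding modes, any further heralding modes being heralded on vacuum. Consequently, if $Q$ cannot be generated from $\prod_{i=1}^n a^\dagger_i|0\rangle$ with the single-photon heralding pattern $(1,\dots,1)$ on $m$ modes (together with arbitrary vacuum heralding), then $Q$ cannot be generated from any $n$-photon multi-mode Fock input with any heralding pattern containing $m$ photons.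
   Context: Heralded linear-optical state generation model. Multi-mode states with a fixed photon number are represented as homogeneous polynomials in commuting variables $a^\dagger_1,\dots,a^\dagger_N$ (creation operators) applied to the vacuum $|0\rangle$. Given $N$ modes, an arbitrary complex $N\times N$ matrix $A$ (not required to be unitary; unitarity can be recovered by rescaling and embedding in a larger mode space), and a Fock input $\prod_{i=1}^N \frac{1}{\sqrt{n_i!}}(a^\dagger_{i,\mathrm{in}})^{n_i}|0\rangle$ with $n=\sum_i n_i$ photons, the output is $F(a^\dagger_1,\dots,a^\dagger_N)|0\rangle$ with $F=\prod_{i=1}^N\frac{1}{\sqrt{n_i!}}\big(\sum_{j=1}^N A_{i,j}a^\dagger_j\big)^{n_i}$. Heralding the last $M$ modes on the photon-number pattern $(m_1,\dots,m_M)$ (entries $\ge 0$; a $0$ entry means heralding on vacuum), $m=\sum_j m_j$, produces the unnormalised state $G(a^\dagger_1,\dots,a^\dagger_{N-M})|0\rangle$ with $G=\frac{1}{\prod_j m_j!}\,\frac{\partial^{m} F}{\partial (a^\dagger_{N-M+1})^{m_1}\cdots\partial (a^\dagger_{N})^{m_M}}\Big|_{a^\dagger_{N-M+1}=\cdots=a^\dagger_N=0}$. A target state $Q$ on $N_T\le N-M$ modes is regarded as a polynomial in $a^\dagger_1,\dots,a^\dagger_{N-M}$ (modes $N_T+1,\dots,N-M$ in vacuum). The target $Q$ can be generated from the given input and heralding pattern if there exist a complex $N\times N$ matrix $A$ and $\gamma\in\mathbb{C}$ with $\gamma G=Q$ as polynomials (this forces the heralding amplitude $1/\gamma$ to be nonzero).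 *)

theory Defs
  imports Complex_Main "HOL-Library.Poly_Mapping"
begin

text \<open>Multivariate polynomials over the complex numbers in commuting variables
  indexed by nat (variable i stands for the creation operator of mode i):
  finitely supported maps from monomials (exponent vectors) to coefficients,
  with the convolution product provided by Poly_Mapping.\<close>

type_synonym mpoly = "(nat \<Rightarrow>\<^sub>0 nat) \<Rightarrow>\<^sub>0 complex"

definition mconst :: "complex \<Rightarrow> mpoly" where
  "mconst c = Poly_Mapping.single 0 c"

definition mvar :: "nat \<Rightarrow> mpoly" where
  "mvar i = Poly_Mapping.single (Poly_Mapping.single i 1) 1"

definition mpderiv :: "nat \<Rightarrow> mpoly \<Rightarrow> mpoly" where
  "mpderiv k p = (\<Sum>(\<alpha>::nat \<Rightarrow>\<^sub>0 nat)\<in>Poly_Mapping.keys p.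
      Poly_Mapping.single (\<alpha> - Poly_Mapping.single k 1)
        (of_nat (Poly_Mapping.lookup \<alpha> k) * (Poly_Mapping.lookup p \<alpha> :: complex)))"

definition mzero_vars :: "nat set \<Rightarrow> mpoly \<Rightarrow> mpoly" where
  "mzero_vars S p = (\<Sum>(\<alpha>::nat \<Rightarrow>\<^sub>0 nat)\<in>Poly_Mapping.keys p.
      if (\<forall>k\<in>S. Poly_Mapping.lookup \<alpha> k = 0) then Poly_Mapping.single \<alpha> (Poly_Mapping.lookup p \<alpha>) else 0)"

definition mdeg :: "(nat \<Rightarrow>\<^sub>0 nat) \<Rightarrow> nat" where
  "mdeg \<alpha> = (\<Sum>k\<in>Poly_Mapping.keys \<alpha>. Poly_Mapping.lookup \<alpha> k)"

definition homogeneous :: "nat \<Rightarrow> mpoly \<Rightarrow> bool" where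
  "homogeneous d p \<longleftrightarrow> (\<forall>\<alpha>\<in>Poly_Mapping.keys p. mdeg \<alpha> = d)"

definition vars_in :: "nat set \<Rightarrow> mpoly \<Rightarrow> bool" where
  "vars_in S p \<longleftrightarrow> (\<forall>\<alpha>\<in>Poly_Mapping.keys p. Poly_Mapping.keys \<alpha> \<subseteq> S)"

text \<open>Output polynomial F of the linear-optical network with (arbitrary complex)
  matrix A on modes 1..N and Fock input with occupation numbers nin i (i = 1..N).\<close>
definition output_poly :: "nat \<Rightarrow> (nat \<Rightarrow> nat \<Rightarrow> complex) \<Rightarrow> (nat \<Rightarrow> nat) \<Rightarrow> mpoly" where
  "output_poly N A nin = (\<Prod>i\<in>{1..N}.
      mconst (complex_of_real (1 / sqrt (real (fact (nin i))))) *
      (\<Sum>j\<in>{1..N}. mconst (A i j) * mvar j) ^ nin i)"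

definition heralded_poly ::
  "nat \<Rightarrow> nat \<Rightarrow> (nat \<Rightarrow> nat \<Rightarrow> complex) \<Rightarrow> (nat \<Rightarrow> nat) \<Rightarrow> (nat \<Rightarrow> nat) \<Rightarrow> mpoly" where
  "heralded_poly N M A nin mpat =
     mconst (1 / of_nat (\<Prod>j\<in>{1..M}. fact (mpat j))) *
     mzero_vars {N - M + 1..N}
       (foldr (\<lambda>j p. (mpderiv (N - M + j) ^^ mpat j) p) [1..<M + 1]
          (output_poly N A nin))"

definition generable :: "nat \<Rightarrow> nat \<Rightarrow> (nat \<Rightarrow> nat) \<Rightarrow> (nat \<Rightarrow> nat) \<Rightarrow> mpoly \<Rightarrow> bool" where
  "generable N M nin mpat Q \<longleftrightarrow>
     (\<exists>A :: nat \<Rightarrow> nat \<Rightarrow> complex. \<exists>\<gamma> :: complex.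
        mconst \<gamma> * heralded_poly N M A nin mpat = Q)"

end

theory Submission
  imports Defs
begin

text \<open>Let the input list \<open>i\<^sub>1, \<dots>, i\<^sub>n\<close> repeat each input mode \<open>i\<close> exactly \<open>n\<^sub>i\<close> times
  and the herald list \<open>h\<^sub>1, \<dots>, h\<^sub>m\<close> repeat each heralded mode \<open>j\<close> exactly \<open>m\<^sub>j\<close> times.
  Up to a nonzero constant (the factorials), the heralded polynomial is \<open>Z (D (L\<^sub>1 \<cdots> L\<^sub>n))\<close>,
  where \<open>L\<^sub>r\<close> is the linear form of row \<open>i\<^sub>r\<close> of the network, \<open>D\<close> differentiates once with
  respect to each \<open>x\<^sub>h\<^sub>t\<close>, and \<open>Z\<close> sets the heralded variables to zero.
  The single-photon network has one input mode with row \<open>L\<^sub>r\<close> for each \<open>r\<close> and one heralded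
  mode for each \<open>t\<close>, whose column is a copy of column \<open>h\<^sub>t\<close>. Its rows arise from the old ones
  by the substitution \<open>\<sigma>\<close> sending each old heralded variable to the sum of the new heralded
  variables copying it. By the chain rule, differentiating once in each new heralded variable
  corresponds under \<open>\<sigma>\<close> to \<open>D\<close>, and setting the new heralded variables to zero undoes \<open>\<sigma>\<close>.
  So the two heralded polynomials agree up to the constant, which is absorbed into \<open>\<gamma>\<close>.\<close>

lemma poly_mapping_sum_single:
  "f = (\<Sum>a\<in>Poly_Mapping.keys f. Poly_Mapping.single a (Poly_Mapping.lookup f a))"
  for f :: "'a \<Rightarrow>\<^sub>0 'b::comm_monoid_add"
  by (rule poly_mapping_eqI) (simp add: lookup_sum lookup_single when_def in_keys_iff)

lemma sum_keys_superset:
  assumes "finite S" "Poly_Mapping.keys p \<subseteq> S" "\<And>a. g a 0 = 0"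
  shows "(\<Sum>a\<in>Poly_Mapping.keys p. g a (Poly_Mapping.lookup p a)) =
    (\<Sum>a\<in>S. g a (Poly_Mapping.lookup p a))"
  by (rule sum.mono_neutral_left) (use assms in \<open>auto simp: in_keys_iff\<close>)

lemma sum_keys_add:
  fixes g :: "'a \<Rightarrow> 'b::comm_monoid_add \<Rightarrow> 'c::comm_monoid_add"
  assumes "\<And>a. g a 0 = 0" and "\<And>a x y. g a (x + y) = g a x + g a y"
  shows "(\<Sum>a\<in>Poly_Mapping.keys (p + q). g a (Poly_Mapping.lookup (p + q) a)) =
    (\<Sum>a\<in>Poly_Mapping.keys p. g a (Poly_Mapping.lookup p a)) +
    (\<Sum>a\<in>Poly_Mapping.keys q. g a (Poly_Mapping.lookup q a))"
proof -
  let ?U = "Poly_Mapping.keys p \<union> Poly_Mapping.keys q"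
  have "(\<Sum>a\<in>Poly_Mapping.keys (p + q). g a (Poly_Mapping.lookup (p + q) a)) =
      (\<Sum>a\<in>?U. g a (Poly_Mapping.lookup (p + q) a))"
    using keys_add assms(1) by (rule sum_keys_superset[rotated]) simp
  also have "\<dots> = (\<Sum>a\<in>?U. g a (Poly_Mapping.lookup p a)) +
      (\<Sum>a\<in>?U. g a (Poly_Mapping.lookup q a))"
    by (simp add: lookup_add assms(2) sum.distrib)
  also have "\<dots> = (\<Sum>a\<in>Poly_Mapping.keys p. g a (Poly_Mapping.lookup p a)) +
      (\<Sum>a\<in>Poly_Mapping.keys q. g a (Poly_Mapping.lookup q a))"
    using sum_keys_superset[of ?U _ g] assms(1) by simp
  finally show ?thesis .
qed

lemma sum_keys_single:
  assumes "g a 0 = 0"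
  shows "(\<Sum>b\<in>Poly_Mapping.keys (Poly_Mapping.single a c).
      g b (Poly_Mapping.lookup (Poly_Mapping.single a c) b)) = g a c"
  using assms by (cases "c = 0") auto

lemma mconst_0 [simp]: "mconst 0 = 0"
  by (simp add: mconst_def)

lemma mconst_1 [simp]: "mconst 1 = 1"
  by (simp add: mconst_def)

lemma mconst_add: "mconst (a + b) = mconst a + mconst b"
  by (simp add: mconst_def single_add)

lemma mconst_mult: "mconst (a * b) = mconst a * mconst b"
  by (simp add: mconst_def mult_single)

lemma mconst_prod: "mconst (\<Prod>i\<in>S. f i) = (\<Prod>i\<in>S. mconst (f i))"
  by (induction S rule: infinite_finite_induct) (auto simp: mconst_mult)

lemma mconst_mult_single:
  "mconst c * Poly_Mapping.single a d = Poly_Mapping.single a (c * d)"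
  by (simp add: mconst_def mult_single)

lemma mvar_power: "mvar k ^ e = Poly_Mapping.single (Poly_Mapping.single k e) 1"
  by (induction e) (auto simp: mvar_def mult_single single_add[symmetric])

lemma mpoly_induct:
  fixes P :: "mpoly \<Rightarrow> bool"
  assumes mconst: "\<And>c. P (mconst c)" and mvar: "\<And>k. P (mvar k)"
    and add: "\<And>p q. P p \<Longrightarrow> P q \<Longrightarrow> P (p + q)"
    and mult: "\<And>p q. P p \<Longrightarrow> P q \<Longrightarrow> P (p * q)"
  shows "P p"
proof -
  have sum: "P (\<Sum>i\<in>S. g i)" if "\<And>i. i \<in> S \<Longrightarrow> P (g i)" for S and g :: "'a \<Rightarrow> mpoly"
    using that mconst[of 0] by (induction S rule: infinite_finite_induct) (auto intro: add)
  have prod: "P (\<Prod>i\<in>S. g i)" if "\<And>i. i \<in> S \<Longrightarrow> P (g i)" for S and g :: "'a \<Rightarrow> mpoly"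
    using that mconst[of 1] by (induction S rule: infinite_finite_induct) (auto intro: mult)
  have power: "P (q ^ e)" if "P q" for q e
    using that mconst[of 1] by (induction e) (auto intro: mult)
  have monomial: "Poly_Mapping.single a 1 =
      (\<Prod>k\<in>Poly_Mapping.keys a. mvar k ^ Poly_Mapping.lookup a k)" for a :: "nat \<Rightarrow>\<^sub>0 nat"
  proof -
    have "finite S \<Longrightarrow> (\<Prod>k\<in>S. mvar k ^ Poly_Mapping.lookup a k) =
        Poly_Mapping.single (\<Sum>k\<in>S. Poly_Mapping.single k (Poly_Mapping.lookup a k)) 1" for S
      by (induction S rule: finite_induct) (auto simp: mvar_power mult_single)
    then show ?thesis
      using poly_mapping_sum_single[of a] by simp
  qed
  have "p = (\<Sum>a\<in>Poly_Mapping.keys p. mconst (Poly_Mapping.lookup p a) * Poly_Mapping.single a 1)"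
    by (subst poly_mapping_sum_single) (simp add: mconst_mult_single)
  also have "P \<dots>"
    unfolding monomial by (intro sum mult mconst prod power mvar)
  finally show ?thesis .
qed

subsection \<open>Substitution\<close>

definition mmon_subst :: "(nat \<Rightarrow> mpoly) \<Rightarrow> (nat \<Rightarrow>\<^sub>0 nat) \<Rightarrow> mpoly" where
  "mmon_subst f a = (\<Prod>k\<in>Poly_Mapping.keys a. f k ^ Poly_Mapping.lookup a k)"

definition msubst :: "(nat \<Rightarrow> mpoly) \<Rightarrow> mpoly \<Rightarrow> mpoly" where
  "msubst f p = (\<Sum>a\<in>Poly_Mapping.keys p. mconst (Poly_Mapping.lookup p a) * mmon_subst f a)"

lemma mmon_subst_superset:
  "finite U \<Longrightarrow> Poly_Mapping.keys a \<subseteq> U \<Longrightarrow>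
    mmon_subst f a = (\<Prod>k\<in>U. f k ^ Poly_Mapping.lookup a k)"
  unfolding mmon_subst_def by (rule prod.mono_neutral_left) (auto simp: in_keys_iff)

lemma mmon_subst_add: "mmon_subst f (a + b) = mmon_subst f a * mmon_subst f b"
proof -
  let ?U = "Poly_Mapping.keys a \<union> Poly_Mapping.keys b"
  have "Poly_Mapping.keys (a + b) \<subseteq> ?U" by (rule keys_add)
  then show ?thesis
    using mmon_subst_superset[of ?U] by (simp add: lookup_add power_add prod.distrib)
qed

lemma msubst_add: "msubst f (p + q) = msubst f p + msubst f q"
  unfolding msubst_def
  by (rule sum_keys_add[where g = "\<lambda>a c. mconst c * mmon_subst f a"]) (simp_all add: mconst_add distrib_right)

lemma msubst_single: "msubst f (Poly_Mapping.single a c) = mconst c * mmon_subst f a"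
  unfolding msubst_def by (rule sum_keys_single) simp

lemma msubst_0 [simp]: "msubst f 0 = 0"
  by (simp add: msubst_def)

lemma msubst_sum: "msubst f (\<Sum>i\<in>S. g i) = (\<Sum>i\<in>S. msubst f (g i))"
  by (induction S rule: infinite_finite_induct) (auto simp: msubst_add)

lemma msubst_mult: "msubst f (p * q) = msubst f p * msubst f q"
proof -
  have "msubst f (p * q) = (\<Sum>a\<in>Poly_Mapping.keys p. \<Sum>b\<in>Poly_Mapping.keys q.
      msubst f (Poly_Mapping.single (a + b) (Poly_Mapping.lookup p a * Poly_Mapping.lookup q b)))"
    by (subst (1 2) poly_mapping_sum_single) (simp add: sum_product mult_single msubst_sum)
  also have "\<dots> = (\<Sum>a\<in>Poly_Mapping.keys p. \<Sum>b\<in>Poly_Mapping.keys q.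
      (mconst (Poly_Mapping.lookup p a) * mmon_subst f a) * (mconst (Poly_Mapping.lookup q b) * mmon_subst f b))"
    by (simp add: msubst_single mmon_subst_add mconst_mult algebra_simps)
  also have "\<dots> = msubst f p * msubst f q"
    unfolding msubst_def by (rule sum_product[symmetric])
  finally show ?thesis .
qed

lemma msubst_mconst [simp]: "msubst f (mconst c) = mconst c"
  using msubst_single[of f 0 c] by (simp add: mconst_def mmon_subst_def)

lemma msubst_1 [simp]: "msubst f 1 = 1"
  using msubst_mconst[of f 1] by simp

lemma msubst_mvar [simp]: "msubst f (mvar k) = f k"
  by (simp add: mvar_def msubst_single mmon_subst_def)

lemma msubst_prod_list: "msubst f (prod_list ps) = prod_list (map (msubst f) ps)"
  by (induction ps) (auto simp: msubst_mult)

lemma msubst_msubst: "msubst g (msubst f p) = msubst (\<lambda>i. msubst g (f i)) p"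
  by (induction p rule: mpoly_induct) (auto simp: msubst_add msubst_mult)

lemma msubst_mvar_id [simp]: "msubst mvar p = p"
  by (induction p rule: mpoly_induct) (auto simp: msubst_add msubst_mult)

definition mzero_subst :: "nat set \<Rightarrow> nat \<Rightarrow> mpoly" where
  "mzero_subst S j = (if j \<in> S then 0 else mvar j)"

lemma mzero_vars_eq_msubst: "mzero_vars S p = msubst (mzero_subst S) p"
  unfolding mzero_vars_def msubst_def
proof (rule sum.cong[OF refl])
  fix a
  show "(if \<forall>k\<in>S. Poly_Mapping.lookup a k = 0
           then Poly_Mapping.single a (Poly_Mapping.lookup p a) else 0) =
        mconst (Poly_Mapping.lookup p a) * mmon_subst (mzero_subst S) a"
  proof (cases "\<forall>k\<in>S. Poly_Mapping.lookup a k = 0")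
    case True
    then have "mmon_subst (mzero_subst S) a = mmon_subst mvar a"
      unfolding mmon_subst_def by (intro prod.cong refl) (auto simp: mzero_subst_def in_keys_iff)
    also have "\<dots> = Poly_Mapping.single a 1"
      using msubst_single[of mvar a 1] by (simp add: msubst_mvar_id)
    finally show ?thesis using True by (simp add: mconst_mult_single)
  next
    case False
    then obtain k where "k \<in> S" "k \<in> Poly_Mapping.keys a" by (auto simp: in_keys_iff)
    then have "mmon_subst (mzero_subst S) a = 0"
      unfolding mmon_subst_def by (intro prod_zero bexI[of _ k]) (auto simp: mzero_subst_def in_keys_iff)
    with False show ?thesis by auto
  qed
qed

subsection \<open>Derivatives and the chain rule\<close>

lemma mpderiv_add: "mpderiv k (p + q) = mpderiv k p + mpderiv k q"
  unfolding mpderiv_def by (rule sum_keys_add) (simp_all add: distrib_left single_add)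

lemma mpderiv_single:
  "mpderiv k (Poly_Mapping.single a c) =
    Poly_Mapping.single (a - Poly_Mapping.single k 1) (of_nat (Poly_Mapping.lookup a k) * c)"
  unfolding mpderiv_def by (rule sum_keys_single) simp

lemma mpderiv_0 [simp]: "mpderiv k 0 = 0"
  by (simp add: mpderiv_def)

lemma mpderiv_sum: "mpderiv k (\<Sum>i\<in>S. g i) = (\<Sum>i\<in>S. mpderiv k (g i))"
  by (induction S rule: infinite_finite_induct) (auto simp: mpderiv_add)

lemma mpderiv_mult_single:
  "mpderiv k (Poly_Mapping.single a c * Poly_Mapping.single b e) =
    mpderiv k (Poly_Mapping.single a c) * Poly_Mapping.single b e +
    Poly_Mapping.single a c * mpderiv k (Poly_Mapping.single b e)"
proof -
  have shift: "Poly_Mapping.single (a - Poly_Mapping.single k 1 + b) (of_nat (Poly_Mapping.lookup a k) * x) =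
      Poly_Mapping.single (a + b - Poly_Mapping.single k 1) (of_nat (Poly_Mapping.lookup a k) * x)"
    for a b :: "nat \<Rightarrow>\<^sub>0 nat" and x :: complex
    \<comment> \<open>the exponents differ (truncated subtraction) only if \<open>lookup a k = 0\<close>, where both vanish\<close>
  proof (cases "Poly_Mapping.lookup a k = 0")
    case False
    then have "a - Poly_Mapping.single k 1 + b = a + b - Poly_Mapping.single k 1"
      by (intro poly_mapping_eqI) (auto simp: lookup_minus lookup_add lookup_single when_def)
    then show ?thesis by simp
  qed simp
  show ?thesis
    using shift[of a b "c * e"] shift[of b a "c * e"]
    by (simp add: mpderiv_single mult_single lookup_add single_add[symmetric] algebra_simps)
qed

lemma mpderiv_mult: "mpderiv k (p * q) = mpderiv k p * q + p * mpderiv k q"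
proof -
  let ?p = "\<lambda>a. Poly_Mapping.single a (Poly_Mapping.lookup p a)"
  let ?q = "\<lambda>b. Poly_Mapping.single b (Poly_Mapping.lookup q b)"
  have "mpderiv k (p * q) = mpderiv k ((\<Sum>a\<in>Poly_Mapping.keys p. ?p a) * (\<Sum>b\<in>Poly_Mapping.keys q. ?q b))"
    by (subst (1 2) poly_mapping_sum_single) (rule refl)
  also have "\<dots> = (\<Sum>a\<in>Poly_Mapping.keys p. \<Sum>b\<in>Poly_Mapping.keys q.
      mpderiv k (?p a) * ?q b + ?p a * mpderiv k (?q b))"
    by (simp add: sum_product mpderiv_sum mpderiv_mult_single)
  also have "\<dots> = (\<Sum>a\<in>Poly_Mapping.keys p. mpderiv k (?p a)) * (\<Sum>b\<in>Poly_Mapping.keys q. ?q b) +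
      (\<Sum>a\<in>Poly_Mapping.keys p. ?p a) * (\<Sum>b\<in>Poly_Mapping.keys q. mpderiv k (?q b))"
    by (simp only: sum_product sum.distrib)
  also have "\<dots> = mpderiv k p * q + p * mpderiv k q"
    by (simp only: mpderiv_sum[symmetric] poly_mapping_sum_single[symmetric])
  finally show ?thesis .
qed

lemma mpderiv_mconst [simp]: "mpderiv k (mconst c) = 0"
  by (simp add: mconst_def mpderiv_single)

lemma mpderiv_mvar: "mpderiv k (mvar j) = (if j = k then 1 else 0)"
  by (auto simp: mvar_def mpderiv_single lookup_single when_def)

lemma foldr_mpderiv_mconst_mult:
  "foldr (\<lambda>t. mpderiv (d t)) ts (mconst c * p) = mconst c * foldr (\<lambda>t. mpderiv (d t)) ts p"
  by (induction ts) (auto simp: mpderiv_mult)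

lemma mpderiv_msubst:
  assumes "\<And>i. mpderiv j (f i) = (if i = k then 1 else 0)"
  shows "mpderiv j (msubst f p) = msubst f (mpderiv k p)"
  by (induction p rule: mpoly_induct)
    (auto simp: assms mpderiv_mvar msubst_add msubst_mult mpderiv_add mpderiv_mult)

lemma foldr_mpderiv_msubst:
  assumes "\<And>t i. t \<in> set ts \<Longrightarrow> mpderiv (d' t) (f i) = (if i = d t then 1 else 0)"
  shows "foldr (\<lambda>t. mpderiv (d' t)) ts (msubst f p) = msubst f (foldr (\<lambda>t. mpderiv (d t)) ts p)"
  using assms by (induction ts) (auto intro: mpderiv_msubst)

lemma foldr_mpderiv_mzero_subst:
  assumes "\<And>t. t \<in> set ts \<Longrightarrow> d t \<notin> S"
  shows "foldr (\<lambda>t. mpderiv (d t)) ts (msubst (mzero_subst S) p) =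
    msubst (mzero_subst S) (foldr (\<lambda>t. mpderiv (d t)) ts p)"
  by (rule foldr_mpderiv_msubst) (use assms in \<open>auto simp: mzero_subst_def mpderiv_mvar\<close>)

text \<open>\<open>msubst (mzero_subst (- S)) p = p\<close> expresses that \<open>p\<close> only involves variables in \<open>S\<close>.\<close>

lemma msubst_cong_support:
  assumes "msubst (mzero_subst (- S)) p = p" and "\<And>i. i \<in> S \<Longrightarrow> f i = g i"
  shows "msubst f p = msubst g p"
proof -
  have "(\<lambda>i. msubst f (mzero_subst (- S) i)) = (\<lambda>i. msubst g (mzero_subst (- S) i))"
    using assms(2) by (auto simp: mzero_subst_def)
  then show ?thesis
    using msubst_msubst[of f "mzero_subst (- S)" p] msubst_msubst[of g "mzero_subst (- S)" p] assms(1)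
    by simp
qed

lemma nth_pred_mem:
  assumes "set xs \<subseteq> A" and "t \<in> {1..length xs}"
  shows "xs ! (t - 1) \<in> A"
proof -
  have "xs ! (t - 1) \<in> set xs"
    using assms(2) by (intro nth_mem) auto
  with assms(1) show ?thesis by blast
qed

lemma map_nth_pred_upt: "map (\<lambda>t. f (xs ! (t - 1))) [1..<length xs + 1] = map f xs"
  by (rule nth_equalityI) (simp_all del: upt_Suc)

definition occupation_list :: "nat \<Rightarrow> (nat \<Rightarrow> nat) \<Rightarrow> nat list" where
  "occupation_list N c = concat (map (\<lambda>i. replicate (c i) i) [1..<N + 1])"

lemma occupation_list_Suc:
  "occupation_list (Suc N) c = occupation_list N c @ replicate (c (Suc N)) (Suc N)"
  by (simp add: occupation_list_def)

lemma length_occupation_list: "length (occupation_list N c) = (\<Sum>i\<in>{1..N}. c i)"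
  by (induction N) (simp_all add: occupation_list_Suc occupation_list_def atLeastAtMostSuc_conv)

lemma set_occupation_list: "set (occupation_list N c) \<subseteq> {1..N}"
  by (auto simp: occupation_list_def)

lemma prod_list_occupation_list:
  "prod_list (map f (occupation_list N c)) = (\<Prod>i\<in>{1..N}. f i ^ c i)"
  by (induction N) (simp_all add: occupation_list_Suc occupation_list_def atLeastAtMostSuc_conv mult.commute)

lemma foldr_occupation_list:
  "foldr D (occupation_list N c) = foldr (\<lambda>i. D i ^^ c i) [1..<N + 1]"
  by (induction N) (simp_all add: occupation_list_Suc occupation_list_def)

lemma occupation_list_single_photons:
  assumes "n \<le> N"
  shows "occupation_list N (\<lambda>i. if i \<le> n then 1 else 0) = [1..<n + 1]"
proof -
  have "occupation_list N (\<lambda>i. if i \<le> n then 1 else 0) = [1..<min n N + 1]" for N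
    by (induction N) (auto simp: occupation_list_Suc occupation_list_def min_def le_Suc_eq)
  with assms show ?thesis by simp
qed

definition row_form :: "nat \<Rightarrow> (nat \<Rightarrow> nat \<Rightarrow> complex) \<Rightarrow> nat \<Rightarrow> mpoly" where
  "row_form N A i = (\<Sum>j\<in>{1..N}. mconst (A i j) * mvar j)"

lemma output_poly_eq:
  "output_poly N A nin =
    mconst (\<Prod>i\<in>{1..N}. complex_of_real (1 / sqrt (real (fact (nin i))))) *
    prod_list (map (row_form N A) (occupation_list N nin))"
  by (simp add: output_poly_def prod_list_occupation_list row_form_def prod.distrib mconst_prod)

lemma heralded_poly_eq:
  "heralded_poly N M A nin mpat =
    mconst ((\<Prod>i\<in>{1..N}. complex_of_real (1 / sqrt (real (fact (nin i))))) /
      of_nat (\<Prod>j\<in>{1..M}. fact (mpat j))) *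
    mzero_vars {N - M + 1..N} (foldr (\<lambda>s. mpderiv (N - M + s)) (occupation_list M mpat)
      (prod_list (map (row_form N A) (occupation_list N nin))))"
  unfolding heralded_poly_def output_poly_eq foldr_occupation_list[symmetric]
    foldr_mpderiv_mconst_mult mzero_vars_eq_msubst msubst_mult msubst_mconst
  by (simp only: mult.assoc[symmetric] mconst_mult[symmetric]) simp

lemma heralded_poly_single_photons:
  assumes "n \<le> N" and "m \<le> M"
  shows "heralded_poly N M A (\<lambda>i. if i \<le> n then 1 else 0) (\<lambda>j. if j \<le> m then 1 else 0) =
    mzero_vars {N - M + 1..N}
      (foldr (\<lambda>t. mpderiv (N - M + t)) [1..<m + 1] (prod_list (map (row_form N A) [1..<n + 1])))"
proof -
  have "(\<Prod>i\<in>{1..N}. complex_of_real (1 / sqrt (real (fact (if i \<le> n then 1 else 0 :: nat))))) = 1"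
    by (rule prod.neutral) simp
  moreover have "(\<Prod>j\<in>{1..M}. fact (if j \<le> m then 1 else 0 :: nat)) = (1 :: nat)"
    by (rule prod.neutral) simp
  ultimately show ?thesis
    using assms by (simp only: heralded_poly_eq occupation_list_single_photons) simp
qed

subsection \<open>Splitting heralded modes into single-photon modes\<close>

text \<open>The network on \<open>K + d + length hs\<close> modes keeps the columns \<open>1..K\<close>, has \<open>d\<close> vacuum
  columns (room for the single-photon input modes), and its column \<open>K + d + t\<close> is a copy of the
  old heralded column \<open>K + hs ! (t - 1)\<close>.\<close>

definition split_matrix ::
  "nat \<Rightarrow> nat \<Rightarrow> nat list \<Rightarrow> (nat \<Rightarrow> nat \<Rightarrow> complex) \<Rightarrow> nat \<Rightarrow> nat \<Rightarrow> complex" where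
  "split_matrix K d hs A i j =
    (if j \<le> K then A i j else if K + d < j then A i (K + hs ! (j - K - d - 1)) else 0)"

definition split_subst :: "nat \<Rightarrow> nat \<Rightarrow> nat list \<Rightarrow> nat \<Rightarrow> mpoly" where
  "split_subst K d hs j =
    (if j \<le> K then mvar j
     else (\<Sum>t\<in>{t \<in> {1..length hs}. K + hs ! (t - 1) = j}. mvar (K + d + t)))"

lemma row_form_split_matrix:
  assumes hs: "set hs \<subseteq> {1..M}"
  shows "row_form (K + d + length hs) (split_matrix K d hs A) i =
    msubst (split_subst K d hs) (row_form (K + M) A i)"
proof -
  let ?n = "length hs" and ?h = "\<lambda>t. K + hs ! (t - 1)"
  let ?kept = "\<Sum>j\<in>{1..K}. mconst (A i j) * mvar j"
  let ?copies = "\<Sum>t\<in>{1..?n}. mconst (A i (?h t)) * mvar (K + d + t)"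
  let ?f = "\<lambda>j. mconst (split_matrix K d hs A i j) * mvar j"
  have "row_form (K + d + ?n) (split_matrix K d hs A) i =
      (\<Sum>j\<in>{1..K + d}. ?f j) + (\<Sum>j\<in>{K + d + 1..K + d + ?n}. ?f j)"
    unfolding row_form_def by (rule sum.ub_add_nat) simp
  also have "(\<Sum>j\<in>{1..K + d}. ?f j) = (\<Sum>j\<in>{1..K}. ?f j) + (\<Sum>j\<in>{K + 1..K + d}. ?f j)"
    by (rule sum.ub_add_nat) simp
  also have "(\<Sum>j\<in>{1..K}. ?f j) = ?kept"
    by (simp add: split_matrix_def)
  also have "(\<Sum>j\<in>{K + 1..K + d}. ?f j) = 0"
    by (simp add: split_matrix_def)
  also have "(\<Sum>j\<in>{K + d + 1..K + d + ?n}. ?f j) = (\<Sum>t\<in>{1..?n}. ?f (t + (K + d)))"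
    using sum.shift_bounds_cl_nat_ivl[of ?f 1 "K + d" ?n] by (simp add: add.commute)
  also have "\<dots> = ?copies"
    by (intro sum.cong) (auto simp: split_matrix_def add.commute)
  also have "?copies = (\<Sum>j\<in>{K + 1..K + M}. \<Sum>t\<in>{t \<in> {1..?n}. ?h t = j}.
      mconst (A i (?h t)) * mvar (K + d + t))"
    by (rule sum.group[symmetric]) (use nth_pred_mem[OF hs] in auto)
  also have "\<dots> = (\<Sum>j\<in>{K + 1..K + M}. mconst (A i j) * split_subst K d hs j)"
    by (intro sum.cong refl) (auto simp: split_subst_def sum_distrib_left)
  also have "?kept = (\<Sum>j\<in>{1..K}. mconst (A i j) * split_subst K d hs j)"
    by (intro sum.cong refl) (simp add: split_subst_def)
  finally show ?thesis
    using sum.ub_add_nat[of 1 K "\<lambda>j. mconst (A i j) * split_subst K d hs j" M]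
    by (simp add: row_form_def msubst_sum msubst_mult)
qed

lemma mpderiv_split_subst:
  assumes "set hs \<subseteq> {1..M}" and "t \<in> {1..length hs}"
  shows "mpderiv (K + d + t) (split_subst K d hs j) = (if j = K + hs ! (t - 1) then 1 else 0)"
proof (cases "j \<le> K")
  case True
  then show ?thesis
    using assms(2) nth_pred_mem[OF assms] by (auto simp: split_subst_def mpderiv_mvar)
next
  case False
  then have "mpderiv (K + d + t) (split_subst K d hs j) =
      (\<Sum>t'\<in>{t' \<in> {1..length hs}. K + hs ! (t' - 1) = j}. if t' = t then 1 else 0)"
    by (simp add: split_subst_def mpderiv_sum mpderiv_mvar)
  also have "\<dots> = (if j = K + hs ! (t - 1) then 1 else 0)"
    using assms(2) by (subst sum.delta) auto
  finally show ?thesis .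
qed

lemma foldr_mpderiv_split_subst:
  assumes hs: "set hs \<subseteq> {1..M}"
  shows "foldr (\<lambda>t. mpderiv (K + d + t)) [1..<length hs + 1] (msubst (split_subst K d hs) p) =
    msubst (split_subst K d hs) (foldr (\<lambda>s. mpderiv (K + s)) hs p)"
proof -
  have "foldr (\<lambda>t. mpderiv (K + d + t)) [1..<length hs + 1] (msubst (split_subst K d hs) p) =
      msubst (split_subst K d hs) (foldr (\<lambda>t. mpderiv (K + hs ! (t - 1))) [1..<length hs + 1] p)"
    by (rule foldr_mpderiv_msubst) (simp add: mpderiv_split_subst[OF hs] del: upt_Suc)
  also have "foldr (\<lambda>t. mpderiv (K + hs ! (t - 1))) [1..<length hs + 1] =
      foldr (\<lambda>s. mpderiv (K + s)) hs"
    using foldr_map[of "\<lambda>s. mpderiv (K + s)" "\<lambda>t. hs ! (t - 1)" "[1..<length hs + 1]"]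
      map_nth_pred_upt[of "\<lambda>s. s" hs]
    by (simp add: comp_def fun_eq_iff del: upt_Suc)
  finally show ?thesis .
qed

lemma msubst_mzero_subst_split_subst:
  assumes "j \<in> {1..K + M}"
  shows "msubst (mzero_subst {K + d + 1..K + d + length hs}) (split_subst K d hs j) =
    mzero_subst {K + 1..K + M} j"
  using assms by (auto simp: split_subst_def mzero_subst_def msubst_sum intro!: sum.neutral)

lemma herald_splitting:
  assumes hs: "set hs \<subseteq> {1..M}"
  shows "mzero_vars {K + d + 1..K + d + length hs}
      (foldr (\<lambda>t. mpderiv (K + d + t)) [1..<length hs + 1]
        (prod_list (map (row_form (K + d + length hs) (split_matrix K d hs A)) rs))) =
    mzero_vars {K + 1..K + M}
      (foldr (\<lambda>s. mpderiv (K + s)) hs (prod_list (map (row_form (K + M) A) rs)))"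
proof -
  let ?\<sigma> = "split_subst K d hs" and ?P = "prod_list (map (row_form (K + M) A) rs)"
  let ?D = "foldr (\<lambda>s. mpderiv (K + s)) hs"
  let ?proj = "mzero_subst (- {1..K + M})"
  have "row_form (K + d + length hs) (split_matrix K d hs A) = (\<lambda>i. msubst ?\<sigma> (row_form (K + M) A i))"
    by (rule ext) (rule row_form_split_matrix[OF hs])
  then have rows: "prod_list (map (row_form (K + d + length hs) (split_matrix K d hs A)) rs) = msubst ?\<sigma> ?P"
    by (simp add: msubst_prod_list comp_def)
  have derivs: "foldr (\<lambda>t. mpderiv (K + d + t)) [1..<length hs + 1] (msubst ?\<sigma> ?P) =
      msubst ?\<sigma> (?D ?P)"
    by (rule foldr_mpderiv_split_subst[OF hs])
  have "msubst ?proj (row_form (K + M) A i) = row_form (K + M) A i" for i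
    by (auto simp: row_form_def msubst_sum msubst_mult mzero_subst_def intro!: sum.cong)
  then have "msubst ?proj ?P = ?P"
    by (simp add: msubst_prod_list comp_def)
  then have support: "msubst ?proj (?D ?P) = ?D ?P"
    using foldr_mpderiv_mzero_subst[of hs "\<lambda>s. K + s" "- {1..K + M}" ?P] hs by fastforce
  show ?thesis
    unfolding rows derivs mzero_vars_eq_msubst msubst_msubst
    by (rule msubst_cong_support[OF support]) (rule msubst_mzero_subst_split_subst)
qed

lemma heralded_poly_single_photon_network:
  assumes hs: "set hs \<subseteq> {1..M}"
  shows "heralded_poly (K + length rs + length hs) (length hs)
      (\<lambda>r j. split_matrix K (length rs) hs A (rs ! (r - 1)) j)
      (\<lambda>i. if i \<le> length rs then 1 else 0) (\<lambda>j. if j \<le> length hs then 1 else 0) =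
    mzero_vars {K + 1..K + M}
      (foldr (\<lambda>s. mpderiv (K + s)) hs (prod_list (map (row_form (K + M) A) rs)))"
proof -
  let ?N' = "K + length rs + length hs" and ?B = "split_matrix K (length rs) hs A"
  have "row_form ?N' (\<lambda>r j. ?B (rs ! (r - 1)) j) = (\<lambda>r. row_form ?N' ?B (rs ! (r - 1)))"
    by (simp add: fun_eq_iff row_form_def)
  then have "map (row_form ?N' (\<lambda>r j. ?B (rs ! (r - 1)) j)) [1..<length rs + 1] =
      map (row_form ?N' ?B) rs"
    using map_nth_pred_upt[of "row_form ?N' ?B" rs] by (simp del: upt_Suc)
  then show ?thesis
    using heralded_poly_single_photons[of "length rs" ?N' "length hs" "length hs"]
      herald_splitting[OF hs, of K "length rs" A rs]
    by (simp del: upt_Suc)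
qed

theorem lemma1:
  fixes n m NT N M :: nat and nin mpat :: "nat \<Rightarrow> nat" and Q :: mpoly
  assumes "m \<le> n"
    and "NT \<ge> 1"
    and "Q \<noteq> 0"
    and "homogeneous (n - m) Q"
    and "vars_in {1..NT} Q"
    and "M \<le> N"
    and "NT \<le> N - M"
    and "(\<Sum>i\<in>{1..N}. nin i) = n"
    and "(\<Sum>j\<in>{1..M}. mpat j) = m"
    and "generable N M nin mpat Q"
  shows "\<exists>N' M' :: nat. n \<le> N' \<and> m \<le> M' \<and> M' \<le> N' \<and> NT \<le> N' - M' \<and>
           generable N' M' (\<lambda>i. if i \<le> n then 1 else 0) (\<lambda>j. if j \<le> m then 1 else 0) Q"
proof -
  \<comment> \<open>The construction works for every \<open>Q\<close>.\<close>
  obtain A \<gamma> where gen: "mconst \<gamma> * heralded_poly N M A nin mpat = Q"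
    using assms(10) unfolding generable_def by blast
  define K where "K = N - M"
  define hs where "hs = occupation_list M mpat"
  define rs where "rs = occupation_list N nin"
  define A' where "A' = (\<lambda>r j. split_matrix K n hs A (rs ! (r - 1)) j)"
  let ?N' = "K + n + m"
  have hs: "length hs = m" "set hs \<subseteq> {1..M}" and rs: "length rs = n"
    using assms(8,9) set_occupation_list by (simp_all only: hs_def rs_def length_occupation_list)
  have N: "K + M = N"
    using \<open>M \<le> N\<close> by (simp add: K_def)
  let ?X = "mzero_vars {K + 1..K + M}
    (foldr (\<lambda>s. mpderiv (K + s)) hs (prod_list (map (row_form (K + M) A) rs)))"
  obtain c where old: "heralded_poly N M A nin mpat = mconst c * ?X"
    using heralded_poly_eq[of N M A nin mpat]
    unfolding K_def[symmetric] hs_def[symmetric] rs_def[symmetric] N by blast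
  have new:
    "heralded_poly ?N' m A' (\<lambda>i. if i \<le> n then 1 else 0) (\<lambda>j. if j \<le> m then 1 else 0) = ?X"
    using heralded_poly_single_photon_network[OF hs(2), of K rs A] unfolding A'_def hs(1) rs .
  have "generable ?N' m (\<lambda>i. if i \<le> n then 1 else 0) (\<lambda>j. if j \<le> m then 1 else 0) Q"
    unfolding generable_def
    using gen old by (intro exI[of _ A'] exI[of _ "\<gamma> * c"]) (simp add: new mconst_mult mult.assoc)
  moreover have "n \<le> ?N'" "m \<le> ?N'" "NT \<le> ?N' - m"
    using assms(7) by (auto simp: K_def)
  ultimately show ?thesis
    by blast
qed

end
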